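(* There exists an invertible matrix $N\in\mathbb C^{n\times n}$ such that $$B(x_1,x_2,x_3)=x_3\,N\,S(x_1,x_2,x_3).$$
   Context: Let $a,b,c\in\mathbb C[s,v]$ be homogeneous of the same degree $n\ge3$, $\gcd(a,b,c)=1$, with $\phi=(a:b:c)$ birational onto its image. Let $p,q$ be a $\mu$-basis: a homogeneous basis of degrees $\mu\le n-\mu$ of the free syzygy module of $(a,b,c)$. $B(x_1,x_2,x_3)=(B_{i,j})_{0\le i,j\le n-1}\in\mathbb C[x_1,x_2,x_3]^{n\times n}$ is the Bézout matrix of $a(s,1)x_3-c(s,1)x_1$ and $b(s,1)x_3-c(s,1)x_2$, defined by $\sum_{i,j}B_{i,j}s^it^j=\frac{1}{s-t}\big[(a(s,1)x_3-c(s,1)x_1)(b(t,1)x_3-c(t,1)x_2)-(a(t,1)x_3-c(t,1)x_1)(b(s,1)x_3-c(s,1)x_2)\big]$. $S(x_1,x_2,x_3)$ is the $n\times n$ Sylvester matrix with respect to $(s,v)$ of $\sum_ix_ip_i(s,v)$ and $\sum_ix_iq_i(s,v)$, whose rows are the coefficient vectors, in the monomial basis of $\mathbb C[s,v]_{n-1}$, of $v^{n-\mu-1-k}s^k\sum_ix_ip_i$ ($0\le k\le n-\mu-1$) and $v^{\mu-1-k}s^k\sum_ix_iq_i$ ($0\le k\le\mu-1$), the rows of $B$ being likewise indexed so that row $i$ is the coefficient vector of $\sum_jB_{i,j}(\cdot)$ in the same monomial basis. *)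

theory Defs
  imports "HOL-Computational_Algebra.Polynomial_Factorial" "HOL-Computational_Algebra.Field_as_Ring" "Jordan_Normal_Form.Matrix"
begin

text \<open>Bivariate polynomials in (s,v) are represented as complex poly poly:
  the outer variable is v, the inner one is s.  So the monomial s^j v^m has
  coefficient coeff (coeff P m) j.\<close>

type_synonym bipoly = "complex poly poly"

definition var_s :: bipoly where "var_s = [:[:0, 1:]:]"
definition var_v :: bipoly where "var_v = [:0, 1:]"

definition bcoeff :: "bipoly \<Rightarrow> nat \<Rightarrow> nat \<Rightarrow> complex" where
  "bcoeff P j m = coeff (coeff P m) j"

definition homogeneous :: "nat \<Rightarrow> bipoly \<Rightarrow> bool" where
  "homogeneous d P \<longleftrightarrow> (\<forall>j m. bcoeff P j m \<noteq> 0 \<longrightarrow> j + m = d)"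

definition eval2 :: "bipoly \<Rightarrow> complex \<Rightarrow> complex \<Rightarrow> complex" where
  "eval2 P s v = poly (map_poly (\<lambda>q. poly q s) P) v"

definition const2 :: "complex \<Rightarrow> bipoly" where "const2 c = [:[:c:]:]"

definition dehom :: "bipoly \<Rightarrow> complex poly" where
  "dehom P = poly P 1"

text \<open>Syzygy of (a,b,c); triples indexed by 1,2,3.\<close>
definition syzygy :: "bipoly \<Rightarrow> bipoly \<Rightarrow> bipoly \<Rightarrow> (nat \<Rightarrow> bipoly) \<Rightarrow> bool" where
  "syzygy a b c h \<longleftrightarrow> h 1 * a + h 2 * b + h 3 * c = 0"

definition mu_basis :: "nat \<Rightarrow> bipoly \<Rightarrow> bipoly \<Rightarrow> bipoly \<Rightarrow> nat \<Rightarrow>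
    (nat \<Rightarrow> bipoly) \<Rightarrow> (nat \<Rightarrow> bipoly) \<Rightarrow> bool" where
  "mu_basis n a b c \<mu> p q \<longleftrightarrow>
     \<mu> \<le> n - \<mu> \<and>
     (\<forall>i\<in>{1..3}. homogeneous \<mu> (p i) \<and> homogeneous (n - \<mu>) (q i)) \<and>
     syzygy a b c p \<and> syzygy a b c q \<and>
     (\<forall>h. syzygy a b c h \<longrightarrow> (\<exists>f g. \<forall>i\<in>{1..3}. h i = f * p i + g * q i)) \<and>
     (\<forall>f g. (\<forall>i\<in>{1..3}. f * p i + g * q i = 0) \<longrightarrow> f = 0 \<and> g = 0)"

text \<open>phi = (a:b:c) : P^1 -> P^2 is birational onto its image, i.e. generically
  injective: injective outside a finite set of parameter values
  (the point at infinity of P^1 being a single extra point).\<close>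
definition birational_onto_image :: "bipoly \<Rightarrow> bipoly \<Rightarrow> bipoly \<Rightarrow> bool" where
  "birational_onto_image a b c \<longleftrightarrow>
     (\<exists>E :: complex set. finite E \<and>
       (\<forall>t t'. t \<notin> E \<longrightarrow> t' \<notin> E \<longrightarrow>
          (\<exists>l. l \<noteq> 0 \<and> eval2 a t' 1 = l * eval2 a t 1 \<and> eval2 b t' 1 = l * eval2 b t 1
                 \<and> eval2 c t' 1 = l * eval2 c t 1) \<longrightarrow> t = t'))"

text \<open>Bezout matrix of F = a(s,1) x3 - c(s,1) x1 and G = b(s,1) x3 - c(s,1) x2,
  evaluated at x = (x1,x2,x3).  Bivariate polys in (s,t): outer variable t.\<close>
definition bezout_form :: "bipoly \<Rightarrow> bipoly \<Rightarrow> bipoly \<Rightarrow> (nat \<Rightarrow> complex) \<Rightarrow> complex poly poly" where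
  "bezout_form a b c x =
     (let F = Polynomial.smult (x 3) (dehom a) - Polynomial.smult (x 1) (dehom c);
          G = Polynomial.smult (x 3) (dehom b) - Polynomial.smult (x 2) (dehom c);
          Fs = [:F:]; Gs = [:G:];
          Ft = map_poly (\<lambda>r. [:r:]) F; Gt = map_poly (\<lambda>r. [:r:]) G
      in (Fs * Gt - Ft * Gs) div [:[:0, 1:], [:-1:]:])"

definition bezout_mat :: "nat \<Rightarrow> bipoly \<Rightarrow> bipoly \<Rightarrow> bipoly \<Rightarrow> (nat \<Rightarrow> complex) \<Rightarrow> complex mat" where
  "bezout_mat n a b c x = mat n n (\<lambda>(i, j). coeff (coeff (bezout_form a b c x) j) i)"

text \<open>Sylvester matrix of sum x_i p_i and sum x_i q_i; column j corresponds to the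
  monomial s^j v^(n-1-j) of C[s,v]_(n-1).\<close>
definition lin_comb :: "(nat \<Rightarrow> complex) \<Rightarrow> (nat \<Rightarrow> bipoly) \<Rightarrow> bipoly" where
  "lin_comb x p = (\<Sum>i\<in>{1..3}. const2 (x i) * p i)"

definition sylv_mat :: "nat \<Rightarrow> nat \<Rightarrow> (nat \<Rightarrow> bipoly) \<Rightarrow> (nat \<Rightarrow> bipoly) \<Rightarrow> (nat \<Rightarrow> complex) \<Rightarrow> complex mat" where
  "sylv_mat n \<mu> p q x = mat n n (\<lambda>(r, j).
     (let P = (if r < n - \<mu>
               then var_v ^ (n - \<mu> - 1 - r) * var_s ^ r * lin_comb x p
               else var_v ^ (\<mu> - 1 - (r - (n - \<mu>))) * var_s ^ (r - (n - \<mu>)) * lin_comb x q)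
      in bcoeff P j (n - 1 - j)))"

end

theory Submission
  imports Defs "HOL-Computational_Algebra.Fundamental_Theorem_Algebra" "Jordan_Normal_Form.Determinant"
begin

(* Write A = (a,b,c)(s,1), P = p(s,1), Q = q(s,1) for the dehomogenised data.
   1. Cross product.  P and Q are orthogonal to A, so P x Q is parallel to A; since
      gcd(A) = 1 it is a multiple r A.  Some entry of A has full degree n while P x Q has
      degree at most n, so r is a constant h0, and h0 <> 0 because p, q are independent.
   2. Bezout form.  With divided differences D f = (f(s) - f(t))/(s - t) and
      G_P = sum_l A_l(s) D P_l, the identity P x Q = h0 A turns the Bezout numerator
      F(s)G(t) - F(t)G(s) into (s - t)(x3/h0)((x.Q)(t) G_P - (x.P)(t) G_Q).  Reading off
      coefficients gives B = x3 N S, where the columns of N hold the t-coefficients of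
      -G_Q/h0 and G_P/h0.
   3. Invertibility.  A left-kernel vector w of N annihilates G_P and G_Q.  Feeding the
      Koszul syzygies of A (which lie in the span of P, Q) through this shows that the
      contractions Phi_l of D A_l against w satisfy Phi_i A_j = Phi_j A_i, hence Phi = r A;
      degrees force r = 0, and the triangular shape of D A_k (deg A_k = n) forces w = 0.
   The file develops two-variable coefficient calculus, vectors of length three, homogeneous
   polynomials, and then the three steps above; the theorem is assembled at the end. *)

section \<open>Polynomials in two variables \<open>s\<close> and \<open>t\<close>\<close>

text \<open>The Bezout form is a polynomial in two variables: it is stored in the type
  \<open>bipoly\<close>, with the inner variable \<open>s\<close> and the outer variable \<open>t\<close>.\<close>

definition st_coeff :: "bipoly \<Rightarrow> nat \<Rightarrow> nat \<Rightarrow> complex" where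
  "st_coeff K i j = coeff (coeff K j) i"

definition in_s :: "complex poly \<Rightarrow> bipoly" where
  "in_s f = [:f:]"

definition in_t :: "complex poly \<Rightarrow> bipoly" where
  "in_t f = map_poly (\<lambda>r. [:r:]) f"

definition s_minus_t :: bipoly where
  "s_minus_t = [:[:0, 1:], [:-1:]:]"

text \<open>The divided difference \<open>(f(s) - f(t)) / (s - t)\<close>; the coefficient of \<open>s^i t^j\<close>
  is the coefficient of \<open>f\<close> at degree \<open>i + j + 1\<close>.\<close>

definition divdiff :: "complex poly \<Rightarrow> bipoly" where
  "divdiff f = (\<Sum>j\<le>degree f. monom (\<Sum>i\<le>degree f. monom (coeff f (i + j + 1)) i) j)"

lemma st_coeff_eqI: "(\<And>i j. st_coeff K i j = st_coeff L i j) \<Longrightarrow> K = L"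
  unfolding st_coeff_def by (simp add: poly_eq_iff)

lemma st_coeff_in_s: "st_coeff (in_s f) i j = (if j = 0 then coeff f i else 0)"
  unfolding st_coeff_def in_s_def by (cases j) auto

lemma st_coeff_in_t: "st_coeff (in_t f) i j = (if i = 0 then coeff f j else 0)"
  unfolding st_coeff_def in_t_def by (cases i) (auto simp: coeff_map_poly)

lemma st_coeff_divdiff: "st_coeff (divdiff f) i j = coeff f (i + j + 1)"
  unfolding st_coeff_def divdiff_def by (auto simp: coeff_sum coeff_eq_0)

lemma st_coeff_add [simp]: "st_coeff (K + L) i j = st_coeff K i j + st_coeff L i j"
  and st_coeff_diff [simp]: "st_coeff (K - L) i j = st_coeff K i j - st_coeff L i j"
  and st_coeff_minus [simp]: "st_coeff (- K) i j = - st_coeff K i j"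
  and st_coeff_0 [simp]: "st_coeff 0 i j = 0"
  and st_coeff_const2_mult [simp]: "st_coeff (const2 c * K) i j = c * st_coeff K i j"
  unfolding st_coeff_def const2_def by simp_all

lemma st_coeff_mult_in_t:
  "st_coeff (K * in_t u) i j = (\<Sum>k\<le>j. st_coeff K i k * coeff u (j - k))"
proof -
  have "coeff (K * in_t u) j = (\<Sum>k\<le>j. coeff K k * [:coeff u (j - k):])"
    by (simp add: coeff_mult in_t_def coeff_map_poly)
  then show ?thesis
    unfolding st_coeff_def by (simp add: coeff_sum mult.commute)
qed

lemma st_coeff_in_t_mult:
  "st_coeff (in_t u * K) i j = (\<Sum>k\<le>j. st_coeff K i k * coeff u (j - k))"
  by (simp add: mult.commute st_coeff_mult_in_t)

lemma in_t_add [simp]: "in_t (f + g) = in_t f + in_t g"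
  by (rule st_coeff_eqI) (simp add: st_coeff_in_t)

lemma in_t_diff [simp]: "in_t (f - g) = in_t f - in_t g"
  by (rule st_coeff_eqI) (simp add: st_coeff_in_t)

lemma in_t_0 [simp]: "in_t 0 = 0"
  by (simp add: in_t_def)

lemma in_t_minus [simp]: "in_t (- f) = - in_t f"
  by (rule st_coeff_eqI) (simp add: st_coeff_in_t)

lemma in_t_smult [simp]: "in_t (Polynomial.smult c f) = const2 c * in_t f"
  by (rule st_coeff_eqI) (simp add: st_coeff_in_t)

lemma in_t_const [simp]: "in_t [:c:] = const2 c"
  unfolding in_t_def const2_def by (simp add: map_poly_pCons)

lemma in_t_mult [simp]: "in_t (f * g) = in_t f * in_t g"
  by (rule st_coeff_eqI) (auto simp: st_coeff_mult_in_t st_coeff_in_t coeff_mult)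

lemma in_s_diff [simp]: "in_s (f - g) = in_s f - in_s g"
  and in_s_smult [simp]: "in_s (Polynomial.smult c f) = const2 c * in_s f"
  and in_s_add [simp]: "in_s (f + g) = in_s f + in_s g"
  and in_s_mult [simp]: "in_s (f * g) = in_s f * in_s g"
  and in_s_0 [simp]: "in_s 0 = 0"
  unfolding in_s_def const2_def by simp_all

lemma st_coeff_s_minus_t_mult: "st_coeff (s_minus_t * K) i j =
   (if i = 0 then 0 else st_coeff K (i - 1) j) - (if j = 0 then 0 else st_coeff K i (j - 1))"
proof -
  have "[:-1:] = (-1 :: complex poly)" by (simp add: one_pCons)
  then have "s_minus_t * K = Polynomial.smult [:0, 1:] K - pCons 0 K"
    unfolding s_minus_t_def by simp
  then show ?thesis
    unfolding st_coeff_def by (cases i; cases j) (auto simp: coeff_pCons)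
qed

lemma s_minus_t_nonzero: "s_minus_t \<noteq> 0"
  unfolding s_minus_t_def by simp

lemma in_s_minus_in_t: "in_s f - in_t f = s_minus_t * divdiff f"
  by (rule st_coeff_eqI)
    (auto simp: st_coeff_s_minus_t_mult st_coeff_divdiff st_coeff_in_s st_coeff_in_t)

lemma coeff_divdiff_eq_0: "degree f \<le> r \<Longrightarrow> coeff (divdiff f) r = 0"
  by (rule poly_eqI) (simp add: st_coeff_divdiff[unfolded st_coeff_def] coeff_eq_0)

section \<open>Vectors of length three\<close>

definition triple :: "'a \<Rightarrow> 'a \<Rightarrow> 'a \<Rightarrow> nat \<Rightarrow> 'a" where
  "triple a b c l = (if l = 1 then a else if l = 2 then b else c)"

definition dot3 :: "(nat \<Rightarrow> 'a::comm_ring_1) \<Rightarrow> (nat \<Rightarrow> 'a) \<Rightarrow> 'a" where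
  "dot3 u v = u 1 * v 1 + u 2 * v 2 + u 3 * v 3"

definition cross3 :: "(nat \<Rightarrow> 'a::comm_ring_1) \<Rightarrow> (nat \<Rightarrow> 'a) \<Rightarrow> nat \<Rightarrow> 'a" where
  "cross3 u v l = (if l = 1 then u 2 * v 3 - u 3 * v 2
                   else if l = 2 then u 3 * v 1 - u 1 * v 3
                   else u 1 * v 2 - u 2 * v 1)"

definition koszul :: "(nat \<Rightarrow> 'a::comm_ring_1) \<Rightarrow> nat \<Rightarrow> nat \<Rightarrow> nat \<Rightarrow> 'a" where
  "koszul u i j l = (if l = i then u j else if l = j then - u i else 0)"

lemma index3_cases: "l \<in> {1..3} \<Longrightarrow> l = 1 \<or> l = 2 \<or> l = (3::nat)"
  by auto

lemma syzygy_iff_dot3: "syzygy a b c h \<longleftrightarrow> dot3 h (triple a b c) = 0"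
  unfolding syzygy_def dot3_def triple_def by simp

lemma dot3_koszul:
  assumes "i \<in> {1..3}" "j \<in> {1..3}" "i \<noteq> j"
  shows "dot3 (koszul u i j) u = 0"
  using index3_cases[OF assms(1)] index3_cases[OF assms(2)] assms(3)
  by (auto simp: dot3_def koszul_def)

lemma dot3_commute: "dot3 u v = dot3 v u"
  unfolding dot3_def by (simp add: mult.commute)

lemma degree_cross3_le:
  fixes P Q :: "nat \<Rightarrow> 'a::comm_ring_1 poly"
  assumes "\<And>l. l \<in> {1..3} \<Longrightarrow> degree (P l) \<le> d \<and> degree (Q l) \<le> e"
  shows "degree (cross3 P Q i) \<le> d + e"
proof -
  have "degree (P l * Q m) \<le> d + e" if "l \<in> {1..3}" "m \<in> {1..3}" for l m
    using degree_mult_le[of "P l" "Q m"] assms[OF that(1)] assms[OF that(2)] by linarith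
  then show ?thesis
    unfolding cross3_def by (auto intro!: degree_diff_le)
qed

lemma cross3_parallel:
  fixes A P Q :: "nat \<Rightarrow> 'a::comm_ring_1"
  assumes "dot3 A P = 0" "dot3 A Q = 0" "i \<in> {1..3}" "j \<in> {1..3}"
  shows "cross3 P Q i * A j = cross3 P Q j * A i"
proof -
  have "cross3 P Q 1 * A 2 - cross3 P Q 2 * A 1 = Q 3 * dot3 A P - P 3 * dot3 A Q"
    "cross3 P Q 1 * A 3 - cross3 P Q 3 * A 1 = P 2 * dot3 A Q - Q 2 * dot3 A P"
    "cross3 P Q 2 * A 3 - cross3 P Q 3 * A 2 = Q 1 * dot3 A P - P 1 * dot3 A Q"
    by (simp_all add: cross3_def dot3_def algebra_simps)
  then show ?thesis
    using assms index3_cases[OF assms(3)] index3_cases[OF assms(4)] by auto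
qed

lemma parallel_to_coprime:
  fixes A V :: "nat \<Rightarrow> 'a::{semiring_gcd, idom}"
  assumes cop: "gcd (A 1) (gcd (A 2) (A 3)) = 1"
    and par: "\<And>i j. i \<in> {1..3} \<Longrightarrow> j \<in> {1..3} \<Longrightarrow> V i * A j = V j * A i"
  shows "\<exists>r. \<forall>i\<in>{1..3}. V i = r * A i"
proof -
  obtain k where k: "k \<in> {1..3}" "A k \<noteq> 0"
  proof -
    have "\<not> (A 1 = 0 \<and> A 2 = 0 \<and> A 3 = 0)"
      using cop by auto
    then show thesis
      using that[of 1] that[of 2] that[of 3] by auto
  qed
  have "A k dvd V k * A j" if "j \<in> {1..3}" for j
    using par[OF k(1) that] by (metis dvd_triv_right)
  then have "A k dvd gcd (V k * A 1) (gcd (V k * A 2) (V k * A 3))"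
    by simp
  also have "\<dots> = normalize (V k)"
    using cop by (simp add: gcd_mult_left)
  finally obtain r where r: "V k = A k * r"
    by (auto elim: dvdE)
  have "V i = r * A i" if "i \<in> {1..3}" for i
  proof -
    have "V i * A k = (r * A i) * A k"
      using par[OF that k(1)] r by (simp add: algebra_simps)
    then show ?thesis using k(2) by simp
  qed
  then show ?thesis by blast
qed

text \<open>Once \<open>h\<^sub>0 A(t)\<close> is replaced by the
  cross product \<open>C = P(t) \<times> Q(t)\<close>, the Bezout numerator \<open>F(s) G(t) - F(t) G(s)\<close> with
  \<open>F = x\<^sub>3 a\<^sub>1 - x\<^sub>1 a\<^sub>3\<close>, \<open>G = x\<^sub>3 a\<^sub>2 - x\<^sub>2 a\<^sub>3\<close> becomes a combination of pairings.\<close>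

lemma cross_identity:
  fixes a x P Q :: "nat \<Rightarrow> 'a::comm_ring_1"
  shows "(x 3 * a 1 - x 1 * a 3) * (x 3 * cross3 P Q 2 - x 2 * cross3 P Q 3)
         - (x 3 * cross3 P Q 1 - x 1 * cross3 P Q 3) * (x 3 * a 2 - x 2 * a 3)
       = x 3 * (dot3 x P * dot3 a Q - dot3 x Q * dot3 a P)"
  by (simp add: dot3_def cross3_def algebra_simps)

section \<open>Homogeneous bivariate polynomials and dehomogenisation\<close>

lemma dehom_add [simp]: "dehom (P + Q) = dehom P + dehom Q"
  and dehom_mult [simp]: "dehom (P * Q) = dehom P * dehom Q"
  and dehom_1 [simp]: "dehom 1 = 1"
  and dehom_const2 [simp]: "dehom (const2 c) = [:c:]"
  and dehom_sum: "dehom (\<Sum>x\<in>X. f x) = (\<Sum>x\<in>X. dehom (f x))"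
  unfolding dehom_def const2_def by (simp_all add: poly_sum)

lemma dehom_dot3: "dehom (dot3 u v) = dot3 (\<lambda>l. dehom (u l)) (\<lambda>l. dehom (v l))"
  unfolding dot3_def by simp

lemma dehom_koszul: "dehom (koszul u i j l) = koszul (\<lambda>l. dehom (u l)) i j l"
  unfolding koszul_def dehom_def by simp

lemma bcoeff_eqI: "(\<And>j m. bcoeff P j m = bcoeff Q j m) \<Longrightarrow> P = Q"
  unfolding bcoeff_def by (simp add: poly_eq_iff)

lemma bcoeff_simps [simp]:
  "bcoeff (P + Q) j m = bcoeff P j m + bcoeff Q j m"
  "bcoeff (const2 c * P) j m = c * bcoeff P j m"
  "bcoeff 0 j m = 0"
  unfolding bcoeff_def const2_def by simp_all

lemma bcoeff_mult:
  "bcoeff (P * Q) j m = (\<Sum>k\<le>m. \<Sum>l\<le>j. bcoeff P l k * bcoeff Q (j - l) (m - k))"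
  unfolding bcoeff_def by (simp add: coeff_mult coeff_sum)

lemma coeff_dehom_homogeneous:
  assumes "homogeneous d P"
  shows "coeff (dehom P) j = (if j \<le> d then bcoeff P j (d - j) else 0)"
proof -
  have "coeff (dehom P) j = (\<Sum>m\<le>degree P. bcoeff P j m)"
    unfolding dehom_def bcoeff_def by (simp add: poly_altdef coeff_sum)
  also have "\<dots> = (\<Sum>m\<le>degree P. if m = d - j \<and> j \<le> d then bcoeff P j (d - j) else 0)"
    using assms unfolding homogeneous_def by (intro sum.cong) force+
  also have "\<dots> = (if j \<le> d then bcoeff P j (d - j) else 0)"
    by (auto simp: bcoeff_def coeff_eq_0)
  finally show ?thesis .
qed

lemma degree_dehom_le: "homogeneous d P \<Longrightarrow> degree (dehom P) \<le> d"
  by (rule degree_le) (simp add: coeff_dehom_homogeneous)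

lemma bcoeff_homogeneous:
  assumes "homogeneous d P"
  shows "bcoeff P j m = (if j + m = d then coeff (dehom P) j else 0)"
proof (cases "j + m = d")
  case True
  then have "m = d - j" "j \<le> d" by auto
  then show ?thesis using True by (simp add: coeff_dehom_homogeneous[OF assms])
qed (use assms in \<open>auto simp: homogeneous_def\<close>)

lemma homogeneous_eq_if_dehom_eq:
  assumes "homogeneous d P" "homogeneous d Q" "dehom P = dehom Q"
  shows "P = Q"
  by (rule bcoeff_eqI) (simp add: bcoeff_homogeneous[OF assms(1)] bcoeff_homogeneous[OF assms(2)] assms(3))

lemma homogeneous_0 [simp]: "homogeneous d 0"
  unfolding homogeneous_def bcoeff_def by simp

lemma homogeneous_add: "homogeneous d P \<Longrightarrow> homogeneous d Q \<Longrightarrow> homogeneous d (P + Q)"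
  and homogeneous_const2_mult: "homogeneous d P \<Longrightarrow> homogeneous d (const2 c * P)"
  unfolding homogeneous_def by (metis add.right_neutral bcoeff_simps(1), simp)

lemma homogeneous_mult:
  assumes "homogeneous d P" "homogeneous e Q"
  shows "homogeneous (d + e) (P * Q)"
  unfolding homogeneous_def
proof (intro allI impI)
  fix j m assume "bcoeff (P * Q) j m \<noteq> 0"
  then obtain k l where kl: "k \<le> m" "l \<le> j" "bcoeff P l k * bcoeff Q (j - l) (m - k) \<noteq> 0"
    unfolding bcoeff_mult by (meson atMost_iff sum.not_neutral_contains_not_neutral)
  then have "l + k = d" "(j - l) + (m - k) = e"
    using assms unfolding homogeneous_def by auto
  then show "j + m = d + e" using kl by linarith
qed

lemma homogeneous_sum:
  "(\<And>x. x \<in> X \<Longrightarrow> homogeneous d (f x)) \<Longrightarrow> homogeneous d (\<Sum>x\<in>X. f x)"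
  by (induction X rule: infinite_finite_induct) (auto intro: homogeneous_add)

lemma homogeneous_lin_comb:
  "(\<And>l. l \<in> {1..3} \<Longrightarrow> homogeneous d (p l)) \<Longrightarrow> homogeneous d (lin_comb x p)"
  unfolding lin_comb_def by (intro homogeneous_sum homogeneous_const2_mult)

lemma dehom_lin_comb: "dehom (lin_comb x p) = dot3 (\<lambda>l. [:x l:]) (\<lambda>l. dehom (p l))"
proof -
  have "{1..3::nat} = {1, 2, 3}" by auto
  then show ?thesis
    unfolding lin_comb_def dehom_sum dot3_def by (simp add: add.assoc)
qed

definition homogenize :: "nat \<Rightarrow> complex poly \<Rightarrow> bipoly" where
  "homogenize d g = (\<Sum>j\<le>d. monom (monom (coeff g j) j) (d - j))"

lemma bcoeff_homogenize:
  "bcoeff (homogenize d g) j m = (if j \<le> d \<and> m = d - j then coeff g j else 0)"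
proof -
  have "bcoeff (homogenize d g) j m = (\<Sum>i\<le>d. if i = j then (if m = d - i then coeff g i else 0) else 0)"
    unfolding homogenize_def bcoeff_def coeff_sum by (intro sum.cong) (auto simp: coeff_monom)
  also have "\<dots> = (if j \<le> d \<and> m = d - j then coeff g j else 0)"
    by (subst sum.delta) auto
  finally show ?thesis .
qed

lemma homogeneous_homogenize: "homogeneous d (homogenize d g)"
  unfolding homogeneous_def bcoeff_homogenize by auto

lemma dehom_homogenize: "degree g \<le> d \<Longrightarrow> dehom (homogenize d g) = g"
  by (rule poly_eqI)
    (auto simp: coeff_dehom_homogeneous[OF homogeneous_homogenize] bcoeff_homogenize coeff_eq_0)

lemma dvd_homogeneous_if_dehom_factor:
  assumes "homogeneous n P" "n \<ge> 1" "homogeneous 1 D"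
    and "dehom P = dehom D * g" "degree g \<le> n - 1"
  shows "D dvd P"
proof -
  have "homogeneous (1 + (n - 1)) (D * homogenize (n - 1) g)"
    by (rule homogeneous_mult[OF assms(3) homogeneous_homogenize])
  then have "homogeneous n (D * homogenize (n - 1) g)"
    using assms(2) by simp
  then have "P = D * homogenize (n - 1) g"
    using assms by (intro homogeneous_eq_if_dehom_eq) (simp_all add: dehom_homogenize)
  then show ?thesis by simp
qed

definition linear_form :: "complex \<Rightarrow> bipoly" where
  "linear_form z = [:[:0, 1:], [:-z:]:]"   \<comment> \<open>the form \<open>s - z v\<close>\<close>

lemma homogeneous_linear_form: "homogeneous 1 (linear_form z)"
  and dehom_linear_form: "dehom (linear_form z) = [:-z, 1:]"
  unfolding homogeneous_def bcoeff_def linear_form_def dehom_def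
  by (auto simp: coeff_pCons split: nat.splits)

lemma homogeneous_var_v: "homogeneous 1 var_v"
  and dehom_var_v: "dehom var_v = 1"
  unfolding homogeneous_def bcoeff_def var_v_def dehom_def
  by (auto simp: coeff_pCons split: nat.splits)

lemma linear_form_dvd_if_root:
  assumes "homogeneous n P" "n \<ge> 1" "poly (dehom P) z = 0"
  shows "linear_form z dvd P"
proof -
  obtain g where g: "dehom P = [:-z, 1:] * g"
    using assms(3) by (auto simp: poly_eq_0_iff_dvd elim: dvdE)
  have "degree g \<le> n - 1"
  proof (cases "g = 0")
    case False
    then have "degree (dehom P) = 1 + degree g"
      unfolding g by (subst degree_mult_eq) auto
    with degree_dehom_le[OF assms(1)] show ?thesis by simp
  qed simp
  then show ?thesis
    using g by (intro dvd_homogeneous_if_dehom_factor[OF assms(1,2) homogeneous_linear_form])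
      (simp_all add: dehom_linear_form)
qed

lemma var_v_dvd_if_degree_drop:
  assumes "homogeneous n P" "n \<ge> 1" "degree (dehom P) < n"
  shows "var_v dvd P"
  using assms by (intro dvd_homogeneous_if_dehom_factor[OF assms(1,2) homogeneous_var_v, of "dehom P"])
    (auto simp: dehom_var_v)

lemma linear_form_not_unit: "\<not> is_unit (linear_form z)"
proof
  assume "is_unit (linear_form z)"
  then obtain u where "1 = linear_form z * u" by (auto elim: dvdE)
  then have "1 = [:-z, 1:] * dehom u"
    by (metis dehom_1 dehom_mult dehom_linear_form)
  then have "is_unit [:-z, 1:]" by (metis dvdI)
  then show False by (auto simp: is_unit_poly_iff)
qed

lemma var_v_not_unit: "\<not> is_unit var_v"
  by (auto simp: is_unit_poly_iff var_v_def)

lemma dehom_no_common_root: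
  assumes "homogeneous n a" "homogeneous n b" "homogeneous n c" "gcd a (gcd b c) = 1" "n \<ge> 1"
  shows "\<not> (poly (dehom a) z = 0 \<and> poly (dehom b) z = 0 \<and> poly (dehom c) z = 0)"
  using assms linear_form_dvd_if_root[of n _ z] linear_form_not_unit
  by (metis gcd_greatest)

lemma dehom_full_degree:
  assumes "homogeneous n a" "homogeneous n b" "homogeneous n c" "gcd a (gcd b c) = 1" "n \<ge> 1"
  shows "degree (dehom a) = n \<or> degree (dehom b) = n \<or> degree (dehom c) = n"
proof (rule ccontr)
  assume "\<not> ?thesis"
  then have "degree (dehom a) < n" "degree (dehom b) < n" "degree (dehom c) < n"
    using degree_dehom_le assms by (metis le_neq_implies_less)+
  then show False
    using assms var_v_dvd_if_degree_drop var_v_not_unit by (metis gcd_greatest)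
qed

lemma gcd3_eq_1_if_no_common_root:
  fixes A1 A2 A3 :: "complex poly"
  assumes "\<And>z. \<not> (poly A1 z = 0 \<and> poly A2 z = 0 \<and> poly A3 z = 0)"
  shows "gcd A1 (gcd A2 A3) = 1"
proof -
  let ?g = "gcd A1 (gcd A2 A3)"
  have "?g dvd A1" "?g dvd A2" "?g dvd A3"
    by (meson dvd_trans gcd_dvd1 gcd_dvd2)+
  then have no_root: "poly ?g z \<noteq> 0" for z
    using assms[of z] by (metis dvd_trans poly_eq_0_iff_dvd)
  then have "degree ?g = 0"
    using fundamental_theorem_of_algebra constant_degree by blast
  moreover have "?g \<noteq> 0"
    using no_root by auto
  ultimately show ?thesis
    by (metis is_unit_iff_degree normalize_gcd is_unit_normalize normalize_1_iff)
qed

section \<open>The dehomogenised \<open>\<mu>\<close>-basis\<close>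

lemma mu_basisD:
  assumes "mu_basis n a b c \<mu> p q"
  shows mu_basis_mu: "\<mu> \<le> n - \<mu>"
    and mu_basis_homogeneous: "\<And>l. l \<in> {1..3} \<Longrightarrow> homogeneous \<mu> (p l)"
      "\<And>l. l \<in> {1..3} \<Longrightarrow> homogeneous (n - \<mu>) (q l)"
    and mu_basis_syzygies: "syzygy a b c p" "syzygy a b c q"
    and mu_basis_generates: "\<And>h. syzygy a b c h \<Longrightarrow> \<exists>f g. \<forall>l\<in>{1..3}. h l = f * p l + g * q l"
    and mu_basis_independent: "\<And>f g. \<forall>l\<in>{1..3}. f * p l + g * q l = 0 \<Longrightarrow> f = 0 \<and> g = 0"
proof -
  note parts = assms[unfolded mu_basis_def]
  show "\<mu> \<le> n - \<mu>"
    using parts by (rule conjunct1)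
  show "homogeneous \<mu> (p l)" "homogeneous (n - \<mu>) (q l)" if "l \<in> {1..3}" for l
    using parts[THEN conjunct2, THEN conjunct1] that by auto
  show "syzygy a b c p" "syzygy a b c q"
    using parts[THEN conjunct2, THEN conjunct2] by auto
  show "\<exists>f g. \<forall>l\<in>{1..3}. h l = f * p l + g * q l" if "syzygy a b c h" for h
    using parts[THEN conjunct2, THEN conjunct2, THEN conjunct2, THEN conjunct2, THEN conjunct1] that
    by blast
  show "f = 0 \<and> g = 0" if "\<forall>l\<in>{1..3}. f * p l + g * q l = 0" for f g
    using parts[THEN conjunct2, THEN conjunct2, THEN conjunct2, THEN conjunct2, THEN conjunct2] that
    by blast
qed

lemma mu_basis_degrees:
  assumes "mu_basis n a b c \<mu> p q" "l \<in> {1..3}"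
  shows "degree (dehom (p l)) \<le> \<mu>" "degree (dehom (q l)) \<le> n - \<mu>"
  using mu_basis_homogeneous[OF assms] degree_dehom_le by blast+

lemma mu_basis_dehom_syzygies:
  assumes "mu_basis n a b c \<mu> p q"
  shows "dot3 (\<lambda>l. dehom (triple a b c l)) (\<lambda>l. dehom (p l)) = 0"
    and "dot3 (\<lambda>l. dehom (triple a b c l)) (\<lambda>l. dehom (q l)) = 0"
proof -
  have "dot3 (triple a b c) p = 0" "dot3 (triple a b c) q = 0"
    using mu_basis_syzygies[OF assms] unfolding syzygy_iff_dot3 by (simp_all add: dot3_commute)
  then have "dehom (dot3 (triple a b c) p) = 0" "dehom (dot3 (triple a b c) q) = 0"
    by (simp_all add: dehom_def)
  then show "dot3 (\<lambda>l. dehom (triple a b c l)) (\<lambda>l. dehom (p l)) = 0"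
    and "dot3 (\<lambda>l. dehom (triple a b c l)) (\<lambda>l. dehom (q l)) = 0"
    unfolding dehom_dot3 .
qed

text \<open>The Koszul syzygies of \<open>A\<close> are combinations of \<open>P\<close> and \<open>Q\<close>, because the Koszul
  syzygies of \<open>(a,b,c)\<close> are combinations of \<open>p\<close> and \<open>q\<close>.\<close>

lemma mu_basis_koszul_span:
  assumes "mu_basis n a b c \<mu> p q" "i \<in> {1..3}" "j \<in> {1..3}" "i \<noteq> j"
  shows "\<exists>F G. \<forall>l\<in>{1..3}. koszul (\<lambda>l. dehom (triple a b c l)) i j l
                               = F * dehom (p l) + G * dehom (q l)"
proof -
  have "syzygy a b c (koszul (triple a b c) i j)"
    unfolding syzygy_iff_dot3 by (rule dot3_koszul[OF assms(2-4)])
  then obtain f g where "\<forall>l\<in>{1..3}. koszul (triple a b c) i j l = f * p l + g * q l"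
    using mu_basis_generates[OF assms(1)] by blast
  then have "koszul (\<lambda>l. dehom (triple a b c l)) i j l
               = dehom f * dehom (p l) + dehom g * dehom (q l)" if "l \<in> {1..3}" for l
    using that by (simp flip: dehom_koszul)
  then show ?thesis by blast
qed

text \<open>The cross product \<open>P \<times> Q\<close> does not vanish: otherwise the homogeneous polynomials
  \<open>p_i q_j - p_j q_i\<close> vanish and \<open>p, q\<close> would be linearly dependent.\<close>

lemma mu_basis_cross_nonzero:
  assumes mb: "mu_basis n a b c \<mu> p q"
  shows "\<exists>l\<in>{1..3}. cross3 (\<lambda>l. dehom (p l)) (\<lambda>l. dehom (q l)) l \<noteq> 0"
proof (rule ccontr)
  assume "\<not> ?thesis"
  then have cross0: "cross3 (\<lambda>l. dehom (p l)) (\<lambda>l. dehom (q l)) l = 0" if "l \<in> {1..3}" for l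
    using that by blast
  note hp = mu_basis_homogeneous[OF mb] and ind = mu_basis_independent[OF mb]
  have minor0: "p i * q j = p j * q i" if "i \<in> {1..3}" "j \<in> {1..3}" for i j
  proof (rule homogeneous_eq_if_dehom_eq)
    show "homogeneous (\<mu> + (n - \<mu>)) (p i * q j)" "homogeneous (\<mu> + (n - \<mu>)) (p j * q i)"
      using that by (simp_all add: homogeneous_mult hp)
    have "dehom (p 2) * dehom (q 3) = dehom (p 3) * dehom (q 2)"
      "dehom (p 3) * dehom (q 1) = dehom (p 1) * dehom (q 3)"
      "dehom (p 1) * dehom (q 2) = dehom (p 2) * dehom (q 1)"
      using cross0[of 1] cross0[of 2] cross0[of 3] by (simp_all add: cross3_def)
    then show "dehom (p i * q j) = dehom (p j * q i)"
      using index3_cases[OF that(1)] index3_cases[OF that(2)] by auto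
  qed
  obtain l where l: "l \<in> {1..3}" "p l \<noteq> 0"
  proof -
    have "\<not> (\<forall>i\<in>{1..3}. p i = 0)"
      using ind[of 1 0] by auto
    then show thesis
      using that by blast
  qed
  have "q l * p i + (- p l) * q i = 0" if "i \<in> {1..3}" for i
    using minor0[OF that l(1)] by (simp add: mult.commute[of "q l"])
  then have "- p l = 0"
    using ind[of "q l" "- p l"] by blast
  then show False
    using l(2) by simp
qed

lemma dehom_triple_coprime:
  assumes "homogeneous n a" "homogeneous n b" "homogeneous n c" "gcd a (gcd b c) = 1" "n \<ge> 1"
  shows "gcd (dehom (triple a b c 1)) (gcd (dehom (triple a b c 2)) (dehom (triple a b c 3))) = 1"
  using dehom_no_common_root[OF assms] unfolding triple_def
  by (simp add: gcd3_eq_1_if_no_common_root)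

lemma dehom_triple_full_degree:
  assumes "homogeneous n a" "homogeneous n b" "homogeneous n c" "gcd a (gcd b c) = 1" "n \<ge> 1"
  shows "\<exists>k\<in>{1..3}. degree (dehom (triple a b c k)) = n"
proof -
  have "triple a b c 1 = a" "triple a b c 2 = b" "triple a b c 3 = c"
    by (simp_all add: triple_def)
  moreover have "(1::nat) \<in> {1..3}" "(2::nat) \<in> {1..3}" "(3::nat) \<in> {1..3}"
    by simp_all
  ultimately show ?thesis
    using dehom_full_degree[OF assms] by metis
qed

text \<open>The cross product is parallel to the coprime triple \<open>A\<close>, hence a multiple
  \<open>r A\<close>; comparing degrees with an entry of \<open>A\<close> of full degree \<open>n\<close> shows that \<open>r\<close> is a
  constant, and it is nonzero by the previous lemma.\<close>

lemma mu_basis_cross_product: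
  assumes "homogeneous n a" "homogeneous n b" "homogeneous n c" "gcd a (gcd b c) = 1" "n \<ge> 1"
    and mb: "mu_basis n a b c \<mu> p q"
  defines "A \<equiv> \<lambda>l. dehom (triple a b c l)"
    and "P \<equiv> \<lambda>l. dehom (p l)" and "Q \<equiv> \<lambda>l. dehom (q l)"
  shows "\<exists>h0. h0 \<noteq> 0 \<and> (\<forall>l\<in>{1..3}. cross3 P Q l = Polynomial.smult h0 (A l))"
proof -
  have "gcd (A 1) (gcd (A 2) (A 3)) = 1"
    unfolding A_def by (rule dehom_triple_coprime[OF assms(1-5)])
  moreover have "cross3 P Q i * A j = cross3 P Q j * A i" if "i \<in> {1..3}" "j \<in> {1..3}" for i j
    using mu_basis_dehom_syzygies[OF mb] that unfolding A_def P_def Q_def by (rule cross3_parallel)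
  ultimately obtain r where r: "\<forall>l\<in>{1..3}. cross3 P Q l = r * A l"
    by (rule exE[OF parallel_to_coprime])
  obtain k where k: "k \<in> {1..3}" "degree (A k) = n"
    using dehom_triple_full_degree[OF assms(1-5)] unfolding A_def by blast
  have "r \<noteq> 0"
  proof
    assume "r = 0"
    then show False
      using mu_basis_cross_nonzero[OF mb] r unfolding P_def Q_def by simp
  qed
  have "A k \<noteq> 0"
    using k assms(5) by auto
  have "r * A k = cross3 P Q k"
    using r k(1) by simp
  then have "degree r + n = degree (cross3 P Q k)"
    using \<open>r \<noteq> 0\<close> \<open>A k \<noteq> 0\<close> k(2) by (metis degree_mult_eq)
  also have "\<dots> \<le> \<mu> + (n - \<mu>)"
    using mu_basis_degrees[OF mb] unfolding P_def Q_def by (intro degree_cross3_le) auto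
  also have "\<dots> = n"
    using mu_basis_mu[OF mb] by simp
  finally have "degree r = 0" by simp
  then obtain h0 where "r = [:h0:]"
    by (rule degree_eq_zeroE)
  then show ?thesis
    using r \<open>r \<noteq> 0\<close> by auto
qed

section \<open>The Bezout form in terms of the \<open>\<mu>\<close>-basis\<close>

text \<open>For a syzygy \<open>P\<close> of \<open>A\<close>, the polynomial \<open>\<Sum>\<^sub>l A\<^sub>l(s) P\<^sub>l(t)\<close> is divisible by \<open>s - t\<close>,
  with quotient \<open>-G\<^sub>P(s,t)\<close> where \<open>G\<^sub>P = \<Sum>\<^sub>l A\<^sub>l(s) (P\<^sub>l(s) - P\<^sub>l(t)) / (s - t)\<close>.\<close>

definition syz_divdiff :: "(nat \<Rightarrow> complex poly) \<Rightarrow> (nat \<Rightarrow> complex poly) \<Rightarrow> bipoly" where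
  "syz_divdiff A P = dot3 (\<lambda>l. in_s (A l)) (\<lambda>l. divdiff (P l))"

lemma syzygy_in_t:
  assumes "dot3 A P = 0"
  shows "dot3 (\<lambda>l. in_s (A l)) (\<lambda>l. in_t (P l)) = - (s_minus_t * syz_divdiff A P)"
proof -
  have t: "in_t (P l) = in_s (P l) - s_minus_t * divdiff (P l)" for l
    by (simp add: in_s_minus_in_t[symmetric])
  have "dot3 (\<lambda>l. in_s (A l)) (\<lambda>l. in_t (P l))
             = in_s (dot3 A P) - s_minus_t * syz_divdiff A P"
    unfolding dot3_def syz_divdiff_def t by (simp add: algebra_simps)
  then show ?thesis
    using assms by simp
qed

lemma st_coeff_syz_divdiff_eq_0:
  assumes "\<And>l. l \<in> {1..3} \<Longrightarrow> degree (P l) \<le> r"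
  shows "st_coeff (syz_divdiff A P) i r = 0"
  using assms unfolding syz_divdiff_def dot3_def st_coeff_def in_s_def
  by (simp add: coeff_divdiff_eq_0)

lemma in_t_cross3: "in_t (cross3 P Q l) = cross3 (\<lambda>l. in_t (P l)) (\<lambda>l. in_t (Q l)) l"
  unfolding cross3_def by simp

lemma in_t_dot3_const: "in_t (dot3 (\<lambda>l. [:x l:]) P) = dot3 (\<lambda>l. const2 (x l)) (\<lambda>l. in_t (P l))"
  unfolding dot3_def by simp

lemma const2_mult: "const2 a * const2 b = const2 (a * b)"
  unfolding const2_def by simp

lemma bezout_numerator:
  fixes A P Q :: "nat \<Rightarrow> complex poly" and x :: "nat \<Rightarrow> complex"
  assumes dP: "dot3 A P = 0" and dQ: "dot3 A Q = 0"
    and cross: "\<And>l. l \<in> {1..3} \<Longrightarrow> cross3 P Q l = Polynomial.smult h0 (A l)"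
    and h0: "h0 \<noteq> 0"
  defines "F \<equiv> Polynomial.smult (x 3) (A 1) - Polynomial.smult (x 1) (A 3)"
    and "G \<equiv> Polynomial.smult (x 3) (A 2) - Polynomial.smult (x 2) (A 3)"
  shows "in_s F * in_t G - in_t F * in_s G =
           s_minus_t * (const2 (x 3 / h0) * (in_t (dot3 (\<lambda>l. [:x l:]) Q) * syz_divdiff A P
                                          - in_t (dot3 (\<lambda>l. [:x l:]) P) * syz_divdiff A Q))"
    (is "?lhs = s_minus_t * (const2 (x 3 / h0) * ?rest)")
proof -
  let ?c = "\<lambda>l. const2 (x l)" and ?a = "\<lambda>l. in_s (A l)"
    and ?P = "\<lambda>l. in_t (P l)" and ?Q = "\<lambda>l. in_t (Q l)"
  have ht: "const2 h0 * in_t (A l) = cross3 ?P ?Q l" if "l \<in> {1..3}" for l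
    using arg_cong[OF cross[OF that], of in_t] by (simp add: in_t_cross3)
  have hF: "const2 h0 * in_t F = ?c 3 * cross3 ?P ?Q 1 - ?c 1 * cross3 ?P ?Q 3"
    unfolding F_def by (simp add: algebra_simps flip: ht)
  have hG: "const2 h0 * in_t G = ?c 3 * cross3 ?P ?Q 2 - ?c 2 * cross3 ?P ?Q 3"
    unfolding G_def by (simp add: algebra_simps flip: ht)
  have "const2 h0 * ?lhs = in_s F * (const2 h0 * in_t G) - (const2 h0 * in_t F) * in_s G"
    by (simp add: algebra_simps)
  also have "\<dots> = (?c 3 * ?a 1 - ?c 1 * ?a 3) * (?c 3 * cross3 ?P ?Q 2 - ?c 2 * cross3 ?P ?Q 3)
                 - (?c 3 * cross3 ?P ?Q 1 - ?c 1 * cross3 ?P ?Q 3) * (?c 3 * ?a 2 - ?c 2 * ?a 3)"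
    unfolding hF hG by (simp add: F_def G_def)
  also have "\<dots> = ?c 3 * (dot3 ?c ?P * dot3 ?a ?Q - dot3 ?c ?Q * dot3 ?a ?P)"
    by (rule cross_identity)
  also have "\<dots> = const2 (x 3) * (s_minus_t * ?rest)"
    by (simp add: syzygy_in_t[OF dP] syzygy_in_t[OF dQ] in_t_dot3_const algebra_simps)
  also have "const2 (x 3) = const2 h0 * const2 (x 3 / h0)"
    using h0 by (simp add: const2_mult)
  also have "\<dots> * (s_minus_t * ?rest) = const2 h0 * (s_minus_t * (const2 (x 3 / h0) * ?rest))"
    by (simp only: ac_simps)
  finally have "const2 h0 * ?lhs = const2 h0 * (s_minus_t * (const2 (x 3 / h0) * ?rest))" .
  moreover have "const2 h0 \<noteq> 0"
    using h0 by (simp add: const2_def)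
  ultimately show ?thesis
    by simp
qed

lemma bezout_form_eq:
  fixes a b c :: bipoly and P Q :: "nat \<Rightarrow> complex poly"
  defines "A \<equiv> \<lambda>l. dehom (triple a b c l)"
  assumes "dot3 A P = 0" "dot3 A Q = 0"
    and "\<And>l. l \<in> {1..3} \<Longrightarrow> cross3 P Q l = Polynomial.smult h0 (A l)" "h0 \<noteq> 0"
  shows "bezout_form a b c x =
           const2 (x 3 / h0) * (in_t (dot3 (\<lambda>l. [:x l:]) Q) * syz_divdiff A P
                              - in_t (dot3 (\<lambda>l. [:x l:]) P) * syz_divdiff A Q)"
proof -
  have A: "A 1 = dehom a" "A 2 = dehom b" "A 3 = dehom c"
    by (simp_all add: A_def triple_def)
  have "bezout_form a b c x =
     (in_s (Polynomial.smult (x 3) (A 1) - Polynomial.smult (x 1) (A 3))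
        * in_t (Polynomial.smult (x 3) (A 2) - Polynomial.smult (x 2) (A 3))
      - in_t (Polynomial.smult (x 3) (A 1) - Polynomial.smult (x 1) (A 3))
        * in_s (Polynomial.smult (x 3) (A 2) - Polynomial.smult (x 2) (A 3))) div s_minus_t"
    unfolding bezout_form_def Let_def A in_s_def in_t_def s_minus_t_def ..
  also have "\<dots> = const2 (x 3 / h0) * (in_t (dot3 (\<lambda>l. [:x l:]) Q) * syz_divdiff A P
                                        - in_t (dot3 (\<lambda>l. [:x l:]) P) * syz_divdiff A Q)"
    using bezout_numerator[OF assms(2-5), of x] s_minus_t_nonzero by simp
  finally show ?thesis .
qed

section \<open>Reading off coefficients: the factorisation \<open>B = x\<^sub>3 N S\<close>\<close>

lemma var_v_power: "var_v ^ e = monom 1 e"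
  unfolding var_v_def by (simp add: monom_altdef)

lemma var_s_power: "var_s ^ k = [:monom 1 k:]"
proof -
  have "[:u:] ^ k = [:u ^ k:]" for u :: "complex poly"
    by (induction k) (auto simp: mult.commute)
  then show ?thesis
    unfolding var_s_def by (simp add: monom_altdef)
qed

lemma bcoeff_shift: "bcoeff (var_v ^ e * var_s ^ k * L) j m =
   (if m < e \<or> j < k then 0 else bcoeff L (j - k) (m - e))"
  unfolding var_v_power var_s_power bcoeff_def mult.assoc
  by (simp add: coeff_monom_mult)

lemma bcoeff_shift_homogeneous:
  assumes "homogeneous d L" "e + k + d = n - 1" "j \<le> n - 1"
  shows "bcoeff (var_v ^ e * var_s ^ k * L) j (n - 1 - j) = coeff (monom 1 k * dehom L) j"
proof (cases "j < k")
  case False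
  then have "n - 1 - j < e \<longleftrightarrow> \<not> j - k \<le> d" "n - 1 - j - e = d - (j - k)"
    using assms(2,3) by arith+
  then show ?thesis
    using False by (simp add: bcoeff_shift coeff_monom_mult coeff_dehom_homogeneous[OF assms(1)])
qed (simp add: bcoeff_shift coeff_monom_mult)

lemma sylv_mat_entry:
  assumes "\<And>l. l \<in> {1..3} \<Longrightarrow> homogeneous \<mu> (p l)"
    and "\<And>l. l \<in> {1..3} \<Longrightarrow> homogeneous (n - \<mu>) (q l)"
    and "\<mu> \<le> n - \<mu>" "r < n" "j < n"
  shows "sylv_mat n \<mu> p q x $$ (r, j) =
           (if r < n - \<mu> then coeff (monom 1 r * dehom (lin_comb x p)) j
            else coeff (monom 1 (r - (n - \<mu>)) * dehom (lin_comb x q)) j)"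
proof -
  have hp: "homogeneous \<mu> (lin_comb x p)" and hq: "homogeneous (n - \<mu>) (lin_comb x q)"
    using homogeneous_lin_comb[OF assms(1)] homogeneous_lin_comb[OF assms(2)] by auto
  show ?thesis
  proof (cases "r < n - \<mu>")
    case True
    have "bcoeff (var_v ^ (n - \<mu> - 1 - r) * var_s ^ r * lin_comb x p) j (n - 1 - j)
          = coeff (monom 1 r * dehom (lin_comb x p)) j"
      by (rule bcoeff_shift_homogeneous[OF hp]) (use assms True in auto)
    then show ?thesis
      using assms(3-5) True unfolding sylv_mat_def by (simp add: Let_def)
  next
    case False
    have "bcoeff (var_v ^ (\<mu> - 1 - (r - (n - \<mu>))) * var_s ^ (r - (n - \<mu>)) * lin_comb x q) j (n - 1 - j)
          = coeff (monom 1 (r - (n - \<mu>)) * dehom (lin_comb x q)) j"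
      by (rule bcoeff_shift_homogeneous[OF hq]) (use assms False in auto)
    then show ?thesis
      using assms(3-5) False unfolding sylv_mat_def by (simp add: Let_def)
  qed
qed

definition bezout_sylvester_factor :: "nat \<Rightarrow> nat \<Rightarrow> complex \<Rightarrow> bipoly \<Rightarrow> bipoly \<Rightarrow> complex mat" where
  "bezout_sylvester_factor n \<mu> h0 GP GQ = mat n n (\<lambda>(i, r).
     if r < n - \<mu> then - st_coeff GQ i r / h0 else st_coeff GP i (r - (n - \<mu>)) / h0)"

lemma bezout_sylvester_factor_carrier: "bezout_sylvester_factor n \<mu> h0 GP GQ \<in> carrier_mat n n"
  unfolding bezout_sylvester_factor_def by simp

lemma sum_lessThan_add: "(\<Sum>r<a + b. f r) = (\<Sum>r<a. f r) + (\<Sum>k<b. f (a + k :: nat))"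
  by (induction b) (auto simp: add.assoc)

lemma sum_shift_convolution:
  fixes g :: "nat \<Rightarrow> complex"
  assumes "\<And>r. r \<ge> M \<Longrightarrow> g r = 0" "j < n" "M \<le> n"
  shows "(\<Sum>r<M. g r * coeff (monom 1 r * X) j) = (\<Sum>k\<le>j. g k * coeff X (j - k))"
proof -
  have "(\<Sum>r<M. g r * coeff (monom 1 r * X) j) = (\<Sum>r<n. g r * coeff (monom 1 r * X) j)"
    by (rule sum.mono_neutral_left) (use assms in auto)
  also have "\<dots> = (\<Sum>r<n. if r \<in> {..j} then g r * coeff X (j - r) else 0)"
    by (rule sum.cong) (auto simp: coeff_monom_mult)
  also have "\<dots> = (\<Sum>r\<in>{..<n} \<inter> {..j}. g r * coeff X (j - r))"
    by (simp add: sum.inter_restrict)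
  also have "{..<n} \<inter> {..j} = {..j}"
    using assms(2) by auto
  finally show ?thesis .
qed

lemma bezout_sylvester_factor_mult_entry:
  fixes U V :: "complex poly"
  assumes S: "S \<in> carrier_mat n n"
    and S_entry: "\<And>r j. r < n \<Longrightarrow> j < n \<Longrightarrow> S $$ (r, j) =
           (if r < n - \<mu> then coeff (monom 1 r * U) j else coeff (monom 1 (r - (n - \<mu>)) * V) j)"
    and GP: "\<And>i r. r \<ge> \<mu> \<Longrightarrow> st_coeff GP i r = 0"
    and GQ: "\<And>i r. r \<ge> n - \<mu> \<Longrightarrow> st_coeff GQ i r = 0"
    and "\<mu> \<le> n - \<mu>" "i < n" "j < n"
  shows "(bezout_sylvester_factor n \<mu> h0 GP GQ * S) $$ (i, j) =
           ((\<Sum>k\<le>j. st_coeff GP i k * coeff V (j - k))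
            - (\<Sum>k\<le>j. st_coeff GQ i k * coeff U (j - k))) / h0"
proof -
  let ?N = "bezout_sylvester_factor n \<mu> h0 GP GQ"
  have "(?N * S) $$ (i, j) = (\<Sum>r<n. ?N $$ (i, r) * S $$ (r, j))"
    using S assms(6,7) bezout_sylvester_factor_carrier[of n \<mu> h0 GP GQ]
    by (auto simp: scalar_prod_def atLeast0LessThan intro!: sum.cong)
  also have "\<dots> = (\<Sum>r<n - \<mu>. ?N $$ (i, r) * S $$ (r, j))
                 + (\<Sum>k<\<mu>. ?N $$ (i, n - \<mu> + k) * S $$ (n - \<mu> + k, j))"
    using sum_lessThan_add[where a = "n - \<mu>" and b = \<mu>] assms(5) by simp
  also have "\<dots> = (\<Sum>r<n - \<mu>. - (st_coeff GQ i r / h0) * coeff (monom 1 r * U) j)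
                 + (\<Sum>k<\<mu>. st_coeff GP i k / h0 * coeff (monom 1 k * V) j)"
    using assms(5-7)
    by (auto simp: bezout_sylvester_factor_def S_entry intro!: sum.cong arg_cong2[where f = "(+)"])
  also have "\<dots> = ((\<Sum>k<\<mu>. st_coeff GP i k * coeff (monom 1 k * V) j)
                 - (\<Sum>r<n - \<mu>. st_coeff GQ i r * coeff (monom 1 r * U) j)) / h0"
    by (simp add: sum_divide_distrib sum_negf diff_divide_distrib)
  also have "\<dots> = ((\<Sum>k\<le>j. st_coeff GP i k * coeff V (j - k))
                 - (\<Sum>k\<le>j. st_coeff GQ i k * coeff U (j - k))) / h0"
    using sum_shift_convolution[of \<mu> "\<lambda>r. st_coeff GP i r" j n V]
      sum_shift_convolution[of "n - \<mu>" "\<lambda>r. st_coeff GQ i r" j n U] GP GQ assms(5,7)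
    by auto
  finally show ?thesis .
qed

lemma st_coeff_bezout_shape:
  "st_coeff (const2 c * (in_t U * K - in_t V * L)) i j =
     c * ((\<Sum>k\<le>j. st_coeff K i k * coeff U (j - k)) - (\<Sum>k\<le>j. st_coeff L i k * coeff V (j - k)))"
  by (simp add: st_coeff_in_t_mult)

lemma bezout_mat_factorization:
  fixes a b c :: bipoly and p q :: "nat \<Rightarrow> bipoly"
  defines "A \<equiv> \<lambda>l. dehom (triple a b c l)"
    and "P \<equiv> \<lambda>l. dehom (p l)" and "Q \<equiv> \<lambda>l. dehom (q l)"
  assumes hp: "\<And>l. l \<in> {1..3} \<Longrightarrow> homogeneous \<mu> (p l)"
    and hq: "\<And>l. l \<in> {1..3} \<Longrightarrow> homogeneous (n - \<mu>) (q l)"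
    and mu: "\<mu> \<le> n - \<mu>"
    and syz: "dot3 A P = 0" "dot3 A Q = 0"
    and cross: "\<And>l. l \<in> {1..3} \<Longrightarrow> cross3 P Q l = Polynomial.smult h0 (A l)" and h0: "h0 \<noteq> 0"
  shows "bezout_mat n a b c x =
           x 3 \<cdot>\<^sub>m (bezout_sylvester_factor n \<mu> h0 (syz_divdiff A P) (syz_divdiff A Q)
                    * sylv_mat n \<mu> p q x)"
proof -
  let ?N = "bezout_sylvester_factor n \<mu> h0 (syz_divdiff A P) (syz_divdiff A Q)"
  let ?S = "sylv_mat n \<mu> p q x"
  have S: "?S \<in> carrier_mat n n"
    unfolding sylv_mat_def by simp
  have XP: "dehom (lin_comb x p) = dot3 (\<lambda>l. [:x l:]) P"
    and XQ: "dehom (lin_comb x q) = dot3 (\<lambda>l. [:x l:]) Q"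
    unfolding P_def Q_def by (simp_all add: dehom_lin_comb)
  have form: "bezout_form a b c x = const2 (x 3 / h0) * (in_t (dot3 (\<lambda>l. [:x l:]) Q) * syz_divdiff A P
                                    - in_t (dot3 (\<lambda>l. [:x l:]) P) * syz_divdiff A Q)"
    unfolding A_def by (rule bezout_form_eq[OF syz[unfolded A_def] cross[unfolded A_def] h0])
  have NS: "(?N * ?S) $$ (i, j) =
      ((\<Sum>k\<le>j. st_coeff (syz_divdiff A P) i k * coeff (dot3 (\<lambda>l. [:x l:]) Q) (j - k))
       - (\<Sum>k\<le>j. st_coeff (syz_divdiff A Q) i k * coeff (dot3 (\<lambda>l. [:x l:]) P) (j - k))) / h0"
    if "i < n" "j < n" for i j
  proof (rule bezout_sylvester_factor_mult_entry[OF S _ _ _ mu that])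
    show "?S $$ (r, j) = (if r < n - \<mu> then coeff (monom 1 r * dot3 (\<lambda>l. [:x l:]) P) j
            else coeff (monom 1 (r - (n - \<mu>)) * dot3 (\<lambda>l. [:x l:]) Q) j)" if "r < n" "j < n" for r j
      unfolding XP[symmetric] XQ[symmetric] using hp hq mu that by (rule sylv_mat_entry)
    show "st_coeff (syz_divdiff A P) i r = 0" if "\<mu> \<le> r" for i r
      using that degree_dehom_le[OF hp] unfolding P_def
      by (intro st_coeff_syz_divdiff_eq_0) (meson order_trans)
    show "st_coeff (syz_divdiff A Q) i r = 0" if "n - \<mu> \<le> r" for i r
      using that degree_dehom_le[OF hq] unfolding Q_def
      by (intro st_coeff_syz_divdiff_eq_0) (meson order_trans)
  qed
  show ?thesis
  proof (rule eq_matI)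
    fix i j assume "i < dim_row (x 3 \<cdot>\<^sub>m (?N * ?S))" "j < dim_col (x 3 \<cdot>\<^sub>m (?N * ?S))"
    then have ij: "i < n" "j < n"
      using S by (simp_all add: bezout_sylvester_factor_def)
    have "bezout_mat n a b c x $$ (i, j) = st_coeff (bezout_form a b c x) i j"
      using ij by (simp add: bezout_mat_def st_coeff_def)
    also have "\<dots> = x 3 * (?N * ?S) $$ (i, j)"
      unfolding form st_coeff_bezout_shape NS[OF ij] by simp
    also have "\<dots> = (x 3 \<cdot>\<^sub>m (?N * ?S)) $$ (i, j)"
      using S ij by (simp add: bezout_sylvester_factor_def)
    finally show "bezout_mat n a b c x $$ (i, j) = (x 3 \<cdot>\<^sub>m (?N * ?S)) $$ (i, j)" .
  qed (use S in \<open>simp_all add: bezout_mat_def bezout_sylvester_factor_def\<close>)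
qed

section \<open>Invertibility of the factor \<open>N\<close>\<close>

lemma invertible_mat_if_det_nonzero:
  assumes "(M :: 'a::field mat) \<in> carrier_mat n n" "det M \<noteq> 0"
  shows "invertible_mat M"
proof -
  have "M \<in> Units (ring_mat TYPE('a) n ())"
    by (rule det_non_zero_imp_unit[OF assms])
  then obtain M' where "M' \<in> carrier_mat n n" "M' * M = 1\<^sub>m n" "M * M' = 1\<^sub>m n"
    unfolding Units_def ring_mat_def by auto
  then show ?thesis
    using assms(1) unfolding invertible_mat_def inverts_mat_def by auto
qed

definition s_contract :: "complex vec \<Rightarrow> nat \<Rightarrow> bipoly \<Rightarrow> complex poly" where
  "s_contract w n K = (\<Sum>i<n. Polynomial.smult (w $ i) (map_poly (\<lambda>c. coeff c i) K))"

lemma coeff_s_contract: "coeff (s_contract w n K) j = (\<Sum>i<n. w $ i * st_coeff K i j)"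
  unfolding s_contract_def st_coeff_def by (simp add: coeff_sum coeff_map_poly)

lemma s_contract_diff: "s_contract w n (K - L) = s_contract w n K - s_contract w n L"
  and s_contract_minus: "s_contract w n (- K) = - s_contract w n K"
  by (rule poly_eqI; simp add: coeff_s_contract algebra_simps sum.distrib sum_subtractf sum_negf)+

lemma s_contract_in_t_mult: "s_contract w n (in_t u * K) = s_contract w n K * u"
proof (rule poly_eqI)
  fix j
  have "coeff (s_contract w n (in_t u * K)) j = (\<Sum>i<n. \<Sum>k\<le>j. w $ i * st_coeff K i k * coeff u (j - k))"
    by (simp add: coeff_s_contract st_coeff_in_t_mult sum_distrib_left mult.assoc)
  also have "\<dots> = (\<Sum>k\<le>j. \<Sum>i<n. w $ i * st_coeff K i k * coeff u (j - k))"
    by (rule sum.swap)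
  also have "\<dots> = coeff (s_contract w n K * u) j"
    by (simp add: coeff_mult coeff_s_contract sum_distrib_right)
  finally show "coeff (s_contract w n (in_t u * K)) j = coeff (s_contract w n K * u) j" .
qed

text \<open>A vector in the left kernel of \<open>N\<close> annihilates both \<open>G\<^sub>P\<close> and \<open>G\<^sub>Q\<close>: the columns of
  \<open>N\<close> list exactly their nonzero \<open>t\<close>-coefficients.\<close>

lemma bezout_sylvester_factor_left_kernel:
  assumes w: "w \<in> carrier_vec n"
      "transpose_mat (bezout_sylvester_factor n \<mu> h0 GP GQ) *\<^sub>v w = 0\<^sub>v n"
    and GP: "\<And>i r. r \<ge> \<mu> \<Longrightarrow> st_coeff GP i r = 0"
    and GQ: "\<And>i r. r \<ge> n - \<mu> \<Longrightarrow> st_coeff GQ i r = 0"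
    and mu: "\<mu> \<le> n - \<mu>" and h0: "h0 \<noteq> 0"
  shows "s_contract w n GP = 0" "s_contract w n GQ = 0"
proof -
  let ?N = "bezout_sylvester_factor n \<mu> h0 GP GQ"
  have col: "(\<Sum>i<n. ?N $$ (i, r) * w $ i) = 0" if "r < n" for r
  proof -
    have "(transpose_mat ?N *\<^sub>v w) $ r = 0"
      using w(2) that by simp
    then show ?thesis
      using that w(1) bezout_sylvester_factor_carrier[of n \<mu> h0 GP GQ]
      by (auto simp: scalar_prod_def atLeast0LessThan intro!: sum.cong elim!: back_subst[where P = "\<lambda>x. x = 0"])
  qed
  show "s_contract w n GQ = 0"
  proof (rule poly_eqI)
    fix j
    show "coeff (s_contract w n GQ) j = coeff 0 j"
    proof (cases "j < n - \<mu>")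
      case True
      then have "(\<Sum>i<n. ?N $$ (i, j) * w $ i) = - (\<Sum>i<n. w $ i * st_coeff GQ i j) / h0"
        by (simp add: bezout_sylvester_factor_def sum_divide_distrib sum_negf mult.commute)
      then show ?thesis
        using col[of j] True h0 by (simp add: coeff_s_contract)
    qed (simp add: coeff_s_contract GQ)
  qed
  show "s_contract w n GP = 0"
  proof (rule poly_eqI)
    fix j
    show "coeff (s_contract w n GP) j = coeff 0 j"
    proof (cases "j < \<mu>")
      case True
      then have "n - \<mu> + j < n" "\<not> n - \<mu> + j < n - \<mu>" "n - \<mu> + j - (n - \<mu>) = j"
        using mu by arith+
      then have "?N $$ (i, n - \<mu> + j) = st_coeff GP i j / h0" if "i < n" for i
        using that unfolding bezout_sylvester_factor_def by (simp only: index_mat split) simp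
      then have "(\<Sum>i<n. ?N $$ (i, n - \<mu> + j) * w $ i) = (\<Sum>i<n. w $ i * st_coeff GP i j) / h0"
        by (simp add: sum_divide_distrib mult.commute)
      then show ?thesis
        using col[of "n - \<mu> + j"] True mu h0 by (simp add: coeff_s_contract)
    qed (simp add: coeff_s_contract GP)
  qed
qed

lemma dot3_koszul_in_t:
  assumes "i \<in> {1..3}" "j \<in> {1..3}" "i \<noteq> j"
  shows "dot3 (\<lambda>l. in_s (A l)) (\<lambda>l. in_t (koszul A i j l))
           = in_s (A i) * in_t (A j) - in_s (A j) * in_t (A i)"
  using index3_cases[OF assms(1)] index3_cases[OF assms(2)] assms(3)
  by (auto simp: dot3_def koszul_def)

lemma bezout_numerator_divdiff:
  "in_s X * in_t Y - in_s Y * in_t X = s_minus_t * (divdiff X * in_t Y - divdiff Y * in_t X)"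
proof -
  have "in_s X = in_t X + s_minus_t * divdiff X" "in_s Y = in_t Y + s_minus_t * divdiff Y"
    by (simp_all add: in_s_minus_in_t[symmetric])
  then show ?thesis
    by (simp add: algebra_simps)
qed

lemma koszul_contract_relation:
  fixes A P Q :: "nat \<Rightarrow> complex poly"
  assumes syz: "dot3 A P = 0" "dot3 A Q = 0"
    and wP: "s_contract w n (syz_divdiff A P) = 0" and wQ: "s_contract w n (syz_divdiff A Q) = 0"
    and ij: "i \<in> {1..3}" "j \<in> {1..3}" "i \<noteq> j"
    and span: "\<forall>l\<in>{1..3}. koszul A i j l = F * P l + G * Q l"
  shows "s_contract w n (divdiff (A i)) * A j = s_contract w n (divdiff (A j)) * A i"
proof -
  have "s_minus_t * (divdiff (A i) * in_t (A j) - divdiff (A j) * in_t (A i))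
        = dot3 (\<lambda>l. in_s (A l)) (\<lambda>l. in_t (koszul A i j l))"
    by (simp add: dot3_koszul_in_t[OF ij] bezout_numerator_divdiff)
  also have "\<dots> = in_t F * dot3 (\<lambda>l. in_s (A l)) (\<lambda>l. in_t (P l))
                 + in_t G * dot3 (\<lambda>l. in_s (A l)) (\<lambda>l. in_t (Q l))"
    using span by (simp add: dot3_def algebra_simps)
  also have "\<dots> = s_minus_t * (- (in_t F * syz_divdiff A P + in_t G * syz_divdiff A Q))"
    by (simp add: syzygy_in_t[OF syz(1)] syzygy_in_t[OF syz(2)] algebra_simps)
  finally have "divdiff (A i) * in_t (A j) - divdiff (A j) * in_t (A i)
                = - (in_t F * syz_divdiff A P + in_t G * syz_divdiff A Q)"
    using s_minus_t_nonzero by simp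
  then have "s_contract w n (divdiff (A i) * in_t (A j) - divdiff (A j) * in_t (A i)) = 0"
    by (simp add: s_contract_minus s_contract_diff s_contract_in_t_mult wP wQ)
  then show ?thesis
    by (simp add: s_contract_diff mult.commute[of "divdiff _"] s_contract_in_t_mult)
qed

lemma coeff_s_contract_divdiff: "coeff (s_contract w n (divdiff f)) j = (\<Sum>i<n. w $ i * coeff f (i + j + 1))"
  by (simp add: coeff_s_contract st_coeff_divdiff)

lemma degree_s_contract_divdiff:
  assumes "degree f \<le> n"
  shows "degree (s_contract w m (divdiff f)) \<le> n - 1"
  by (rule degree_le) (use assms in \<open>auto simp: coeff_s_contract_divdiff coeff_eq_0\<close>)

text \<open>The divided difference of a polynomial of exact degree \<open>n\<close> is triangular with
  nonzero diagonal: contracting it to zero forces \<open>w = 0\<close>.\<close>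

lemma s_contract_divdiff_eq_0:
  assumes deg: "degree f = n" and n: "n \<ge> 1" and z: "s_contract w n (divdiff f) = 0"
  shows "m < n \<Longrightarrow> w $ m = 0"
proof (induction m rule: less_induct)
  case (less m)
  have "(\<Sum>i<n. w $ i * coeff f (i + (n - 1 - m) + 1)) = (\<Sum>i<n. if i = m then w $ m * coeff f n else 0)"
  proof (rule sum.cong)
    fix i assume "i \<in> {..<n}"
    consider "i < m" | "i = m" | "i > m"
      by linarith
    then show "w $ i * coeff f (i + (n - 1 - m) + 1) = (if i = m then w $ m * coeff f n else 0)"
    proof cases
      case 3
      then have "i + (n - 1 - m) + 1 > degree f"
        using less deg by auto
      then show ?thesis
        using 3 by (simp add: coeff_eq_0)
    qed (use less in auto)
  qed simp
  then have "w $ m * coeff f n = 0"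
    using arg_cong[OF z, of "\<lambda>g. coeff g (n - 1 - m)"] less by (simp add: coeff_s_contract_divdiff)
  moreover have "f \<noteq> 0"
    using deg n by auto
  then have "coeff f n \<noteq> 0"
    using deg by auto
  ultimately show ?case by simp
qed

text \<open>Take \<open>w\<close> in the left kernel of \<open>N\<close>.
  Then \<open>\<Phi> = (\<Phi>\<^sub>1, \<Phi>\<^sub>2, \<Phi>\<^sub>3)\<close> is parallel to the coprime triple \<open>A\<close>, hence \<open>\<Phi> = r A\<close>;
  since \<open>\<Phi>\<^sub>k\<close> has degree \<open>< n = deg A\<^sub>k\<close>, \<open>r = 0\<close>, and then \<open>\<Phi>\<^sub>k = 0\<close> forces \<open>w = 0\<close>.\<close>

lemma bezout_sylvester_factor_invertible:
  fixes A P Q :: "nat \<Rightarrow> complex poly"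
  assumes mu: "\<mu> \<le> n - \<mu>" and n: "n \<ge> 1"
    and syz: "dot3 A P = 0" "dot3 A Q = 0"
    and degP: "\<And>l. l \<in> {1..3} \<Longrightarrow> degree (P l) \<le> \<mu>"
    and degQ: "\<And>l. l \<in> {1..3} \<Longrightarrow> degree (Q l) \<le> n - \<mu>"
    and cop: "gcd (A 1) (gcd (A 2) (A 3)) = 1"
    and k: "k \<in> {1..3}" "degree (A k) = n"
    and span: "\<And>i j. i \<in> {1..3} \<Longrightarrow> j \<in> {1..3} \<Longrightarrow> i \<noteq> j \<Longrightarrow>
                 \<exists>F G. \<forall>l\<in>{1..3}. koszul A i j l = F * P l + G * Q l"
    and h0: "h0 \<noteq> 0"
  shows "invertible_mat (bezout_sylvester_factor n \<mu> h0 (syz_divdiff A P) (syz_divdiff A Q))"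
proof -
  let ?N = "bezout_sylvester_factor n \<mu> h0 (syz_divdiff A P) (syz_divdiff A Q)"
  have "det ?N \<noteq> 0"
  proof
    assume "det ?N = 0"
    then have "det (transpose_mat ?N) = 0"
      by (simp add: det_transpose[OF bezout_sylvester_factor_carrier])
    then obtain w where w: "w \<in> carrier_vec n" "w \<noteq> 0\<^sub>v n" "transpose_mat ?N *\<^sub>v w = 0\<^sub>v n"
      using det_0_iff_vec_prod_zero[of "transpose_mat ?N" n] bezout_sylvester_factor_carrier by auto
    have "st_coeff (syz_divdiff A P) i r = 0" if "\<mu> \<le> r" for i r
      using degP that by (intro st_coeff_syz_divdiff_eq_0) (meson order_trans)
    moreover have "st_coeff (syz_divdiff A Q) i r = 0" if "n - \<mu> \<le> r" for i r
      using degQ that by (intro st_coeff_syz_divdiff_eq_0) (meson order_trans)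
    ultimately have wP: "s_contract w n (syz_divdiff A P) = 0"
      and wQ: "s_contract w n (syz_divdiff A Q) = 0"
      using bezout_sylvester_factor_left_kernel[OF w(1,3) _ _ mu h0] by blast+
    define \<Phi> where "\<Phi> l = s_contract w n (divdiff (A l))" for l
    have "\<Phi> i * A j = \<Phi> j * A i" if ij: "i \<in> {1..3}" "j \<in> {1..3}" for i j
    proof (cases "i = j")
      case False
      then obtain F G where "\<forall>l\<in>{1..3}. koszul A i j l = F * P l + G * Q l"
        using span[OF ij] by blast
      then show ?thesis
        unfolding \<Phi>_def using koszul_contract_relation[OF syz wP wQ ij False] by blast
    qed simp
    then obtain r where r: "\<forall>l\<in>{1..3}. \<Phi> l = r * A l"
      using parallel_to_coprime[OF cop] by blast
    have "r = 0"
    proof (rule ccontr)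
      assume "r \<noteq> 0"
      moreover have "A k \<noteq> 0"
        using k n by auto
      ultimately have "degree (\<Phi> k) = degree r + n"
        using r k by (simp add: degree_mult_eq)
      moreover have "degree (\<Phi> k) \<le> n - 1"
        unfolding \<Phi>_def using k(2) by (intro degree_s_contract_divdiff) simp
      ultimately show False
        using n by simp
    qed
    then have "s_contract w n (divdiff (A k)) = 0"
      using r k(1) by (simp add: \<Phi>_def)
    then have "w = 0\<^sub>v n"
      using s_contract_divdiff_eq_0[OF k(2) n] w(1) by (intro eq_vecI) auto
    then show False
      using w(2) by simp
  qed
  then show ?thesis
    by (rule invertible_mat_if_det_nonzero[OF bezout_sylvester_factor_carrier])
qed

theorem proposition6p1:
  fixes n \<mu> :: nat and a b c :: bipoly and p q :: "nat \<Rightarrow> bipoly"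
  assumes "n \<ge> 3"
    and "homogeneous n a" and "homogeneous n b" and "homogeneous n c"
    and "gcd a (gcd b c) = 1"
    and "birational_onto_image a b c"
    and "mu_basis n a b c \<mu> p q"
  shows "\<exists>N \<in> carrier_mat n n. invertible_mat N \<and>
           (\<forall>x :: nat \<Rightarrow> complex. bezout_mat n a b c x = x 3 \<cdot>\<^sub>m (N * sylv_mat n \<mu> p q x))"
proof -
  define A where "A = (\<lambda>l. dehom (triple a b c l))"
  define P where "P = (\<lambda>l. dehom (p l))"
  define Q where "Q = (\<lambda>l. dehom (q l))"
  have n: "n \<ge> 1" and mb: "mu_basis n a b c \<mu> p q" and abc: "homogeneous n a" "homogeneous n b"
    "homogeneous n c" "gcd a (gcd b c) = 1"
    using assms by simp_all
  obtain h0 where h0: "h0 \<noteq> 0" and cross: "\<forall>l\<in>{1..3}. cross3 P Q l = Polynomial.smult h0 (A l)"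
    using mu_basis_cross_product[OF abc n mb] unfolding A_def P_def Q_def by blast
  have syz: "dot3 A P = 0" "dot3 A Q = 0"
    using mu_basis_dehom_syzygies[OF mb] unfolding A_def P_def Q_def .
  obtain k where k: "k \<in> {1..3}" "degree (A k) = n"
    using dehom_triple_full_degree[OF abc n] unfolding A_def by blast
  let ?N = "bezout_sylvester_factor n \<mu> h0 (syz_divdiff A P) (syz_divdiff A Q)"
  have "invertible_mat ?N"
  proof (rule bezout_sylvester_factor_invertible[OF mu_basis_mu[OF mb] n syz _ _ _ k _ h0])
    show "gcd (A 1) (gcd (A 2) (A 3)) = 1"
      unfolding A_def by (rule dehom_triple_coprime[OF abc n])
  qed (use mu_basis_degrees[OF mb] mu_basis_koszul_span[OF mb] in \<open>simp_all add: A_def P_def Q_def\<close>)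
  moreover have "bezout_mat n a b c x = x 3 \<cdot>\<^sub>m (?N * sylv_mat n \<mu> p q x)" for x
    unfolding A_def P_def Q_def
    by (rule bezout_mat_factorization[OF mu_basis_homogeneous[OF mb] mu_basis_mu[OF mb]
          syz[unfolded A_def P_def Q_def] cross[unfolded A_def P_def Q_def, rule_format] h0])
  ultimately show ?thesis
    using bezout_sylvester_factor_carrier by blast
qed

end
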